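(* Let $F$ be a smoothed envelope distribution in $\mathrm{MDA}(\gamma)$ with $\gamma\ge0$ and unbounded support, let $G$ be a distribution on $\mathbb N_+$ with $\overline G\le\overline F$, let $X\sim G$, and for $u\ge1$ define $$\Sigma(u)=\mathbb E\big[\mathbb I\{X>u\}\log(1+X-u)\big].$$ Then for every $\epsilon>0$ there exists $t_0$ (depending on $\epsilon$ and $F$) such that for all $t>t_0$ and all $u\ge 1$, $$\Sigma(u)\le \overline G(u)\log t+\Big(\frac{\gamma}{\ln 2}+\epsilon\Big)\overline F(t).$$
   Context: $\log$ is base 2 and $\ln$ is natural log. A smoothed envelope distribution is a c.d.f. $F$ on $\mathbb R_+$ with continuous derivative; $\overline F=1-F$, $\overline G=1-G$, $U(t)=\overline F^{-1}(1/t)$, and $F\in\mathrm{MDA}(\gamma)$ means there exist $A_n>0$ with $F^n(A_nx+U(n))\to\exp(-(1+\gamma x)^{-1/\gamma})$ (interpreted as $\exp(-e^{-x})$ when $\gamma=0$) for all $x$ with $1+\gamma x>0$. ($\overline G\le\overline F$ holds when $G$ is the marginal of a source in the envelope class defined by $F$.) *)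

theory Defs
  imports "HOL-Probability.Probability"
begin

definition smoothed_envelope :: "(real \<Rightarrow> real) \<Rightarrow> bool" where
  "smoothed_envelope F \<longleftrightarrow>
     mono F \<and> (\<forall>x<0. F x = 0) \<and> (F \<longlongrightarrow> 1) at_top \<and> continuous_on UNIV F \<and>
     (\<exists>f. continuous_on {0<..} f \<and> (\<forall>x>0. (F has_real_derivative f x) (at x)))"

definition tailinv :: "(real \<Rightarrow> real) \<Rightarrow> real \<Rightarrow> real" where
  "tailinv F t = Inf {x. F x \<ge> 1 - 1 / t}"

definition gev :: "real \<Rightarrow> real \<Rightarrow> real" where
  "gev \<gamma> x = (if \<gamma> = 0 then exp (- exp (- x)) else exp (- ((1 + \<gamma> * x) powr (- 1 / \<gamma>))))"

definition MDA :: "(real \<Rightarrow> real) \<Rightarrow> real \<Rightarrow> bool" where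
  "MDA F \<gamma> \<longleftrightarrow> (\<exists>A :: nat \<Rightarrow> real. (\<forall>n. A n > 0) \<and>
     (\<forall>x. 1 + \<gamma> * x > 0 \<longrightarrow>
        (\<lambda>n. (F (A n * x + tailinv F (real n))) ^ n) \<longlonglongrightarrow> gev \<gamma> x))"

end

theory Submission
  imports Defs "HOL-Real_Asymp.Real_Asymp"
begin

text \<open>Split the excess \<open>log (1 + X - u)\<close> at the levels \<open>t, t l, t l\<^sup>2, \<dots>\<close>: below \<open>t\<close> it
  is at most \<open>log t\<close>, and each level exceeded by \<open>X\<close> adds \<open>log l\<close>, so the expectation is at most
  \<open>P(X > u) log t + log l \<Sum>\<^sub>i (1 - F (t l\<^sup>i))\<close>. Comparing the quantile function \<open>U\<close> with the
  normalisation in the domain-of-attraction limit gives \<open>U (k r) \<le> l U r\<close> for large \<open>r\<close> whenever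
  \<open>l > k\<^sup>\<gamma>\<close>; inverting, \<open>1 - F (l s) \<le> (1 - F s) / k\<close> for large \<open>s\<close>, so the sum is geometric
  and at most \<open>k / (k - 1) (1 - F t)\<close>. Letting \<open>k \<down> 1\<close> and \<open>l \<down> k\<^sup>\<gamma>\<close> makes
  \<open>log l \<cdot> k / (k - 1)\<close> approach \<open>\<gamma> / ln 2\<close>.\<close>

definition gev_exponent :: "real \<Rightarrow> real \<Rightarrow> real" where
  "gev_exponent \<gamma> x = (if \<gamma> = 0 then exp (- x) else (1 + \<gamma> * x) powr (- 1 / \<gamma>))"

lemma gev_eq_exp_gev_exponent: "gev \<gamma> x = exp (- gev_exponent \<gamma> x)"
  by (simp add: gev_def gev_exponent_def)

lemma gev_exponent_pos: "1 + \<gamma> * x > 0 \<Longrightarrow> gev_exponent \<gamma> x > 0"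
  by (simp add: gev_exponent_def)

lemma exists_gev_exponent_ratio:
  fixes \<gamma> k l :: real
  assumes \<gamma>: "\<gamma> \<ge> 0" and k: "k > 1" and l: "l > 1" and lk: "l > k powr \<gamma>"
  shows "\<exists>x>0. k * gev_exponent \<gamma> (l * x) < gev_exponent \<gamma> x"
proof (cases "\<gamma> = 0")
  case True
  define x where "x = ln k / (l - 1) + 1"
  have "ln k / (l - 1) > 0" using k l by simp
  hence x: "x > 0" by (simp add: x_def)
  have "(l - 1) * x = ln k + (l - 1)" using l by (simp add: x_def distrib_left)
  hence "ln k - l * x < - x" using l by (simp add: algebra_simps)
  hence "exp (ln k - l * x) < exp (- x)" by simp
  hence "k * exp (- (l * x)) < exp (- x)" using k by (simp add: exp_diff exp_minus field_simps)
  thus ?thesis using x True by (auto simp: gev_exponent_def)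
next
  case False
  hence \<gamma>: "\<gamma> > 0" using \<gamma> by simp
  define q where "q = k powr \<gamma>"
  have q: "q > 0" "l > q" using k lk by (simp_all add: q_def)
  define x where "x = q / (\<gamma> * (l - q))"
  have x: "x > 0" using q \<gamma> by (simp add: x_def)
  have a: "1 + \<gamma> * x > 0" using \<gamma> x by (simp add: add_pos_pos)
  have "\<gamma> * x * (l - q) = q" using \<gamma> q by (simp add: x_def)
  hence "q * (1 + \<gamma> * x) < 1 + \<gamma> * (l * x)" by (simp add: algebra_simps)
  hence "(1 + \<gamma> * (l * x)) powr (- 1 / \<gamma>) < (q * (1 + \<gamma> * x)) powr (- 1 / \<gamma>)"
    using \<gamma> q a by (intro powr_less_mono2_neg) auto
  also have "\<dots> = (1 + \<gamma> * x) powr (- 1 / \<gamma>) / k"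
    using \<gamma> q a k by (simp add: powr_mult q_def powr_powr powr_minus divide_inverse)
  finally show ?thesis using x False k by (auto simp: gev_exponent_def field_simps)
qed

text \<open>With \<open>\<delta> = k - 1\<close>, \<open>ln l \<le> \<gamma> \<delta> + \<eta>\<close>; the choices make \<open>\<gamma> \<delta> \<le> \<epsilon> ln 2 / 2\<close> and
  \<open>\<eta> k / \<delta> = \<epsilon> ln 2 / 2\<close>.\<close>
lemma exists_scale_constants:
  fixes \<gamma> \<epsilon> :: real
  assumes \<gamma>: "\<gamma> \<ge> 0" and \<epsilon>: "\<epsilon> > 0"
  shows "\<exists>k l. k > 1 \<and> l > 1 \<and> l > k powr \<gamma> \<and> log 2 l * k / (k - 1) \<le> \<gamma> / ln 2 + \<epsilon>"
proof -
  define k where "k = 1 + \<epsilon> * ln 2 / (2 * \<gamma> + 2)"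
  define \<eta> where "\<eta> = \<epsilon> * ln 2 * (k - 1) / (2 * k)"
  define l where "l = k powr \<gamma> * (1 + \<eta>)"
  have d: "2 * \<gamma> + 2 > 0" using \<gamma> by simp
  have \<delta>: "k - 1 = \<epsilon> * ln 2 / (2 * \<gamma> + 2)" by (simp add: k_def)
  moreover have "\<epsilon> * ln 2 / (2 * \<gamma> + 2) > 0" using \<epsilon> d by simp
  ultimately have k: "k > 1" by linarith
  hence \<eta>: "\<eta> > 0" using \<epsilon> by (simp add: \<eta>_def)
  have kg: "k powr \<gamma> \<ge> 1" using k \<gamma> by (simp add: ge_one_powr_ge_zero)
  hence "k powr \<gamma> * 1 < k powr \<gamma> * (1 + \<eta>)" using \<eta> by (intro mult_strict_left_mono) auto
  hence lk: "l > k powr \<gamma>" by (simp add: l_def)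
  have "ln k \<le> k - 1" using k by (intro ln_le_minus_one) simp
  hence "\<gamma> * ln k \<le> \<gamma> * (k - 1)" using \<gamma> by (intro mult_left_mono)
  moreover have "ln (1 + \<eta>) \<le> \<eta>" using \<eta> by (intro ln_add_one_self_le_self) simp
  moreover have "ln l = \<gamma> * ln k + ln (1 + \<eta>)"
    using k \<eta> by (simp add: l_def ln_mult ln_powr)
  ultimately have "ln l * k / (k - 1) \<le> (\<gamma> * (k - 1) + \<eta>) * k / (k - 1)"
    using k by (intro divide_right_mono mult_right_mono) auto
  also have "\<dots> = \<gamma> + \<gamma> * (k - 1) + \<epsilon> * ln 2 / 2"
    using k by (simp add: \<eta>_def field_simps)
  also have "\<gamma> * (k - 1) = \<epsilon> * ln 2 / 2 * (2 * \<gamma> / (2 * \<gamma> + 2))"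
    unfolding \<delta> using d by (simp add: field_simps)
  also have "\<dots> \<le> \<epsilon> * ln 2 / 2 * 1"
    using d \<gamma> \<epsilon> by (intro mult_left_mono) auto
  finally have "ln l * k / (k - 1) / ln 2 \<le> (\<gamma> + \<epsilon> * ln 2) / ln 2"
    by (intro divide_right_mono) auto
  hence "log 2 l * k / (k - 1) \<le> \<gamma> / ln 2 + \<epsilon>"
    by (simp add: log_def field_simps)
  thus ?thesis using k kg lk by (intro exI[of _ k] exI[of _ l]) auto
qed

lemma ln_bounds_one_minus:
  fixes q :: real assumes "q > 0"
  shows "q * - ln q \<le> 1 - q" and "1 - q \<le> - ln q"
proof -
  have "ln (1 / q) \<le> 1 / q - 1" using assms by (intro ln_le_minus_one) simp
  hence "q * - ln q \<le> q * (1 / q - 1)" using assms by (intro mult_left_mono) (simp_all add: ln_div)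
  thus "q * - ln q \<le> 1 - q" using assms by (simp add: right_diff_distrib)
  show "1 - q \<le> - ln q" using ln_le_minus_one[OF assms] by simp
qed

text \<open>If \<open>q\<^sup>b \<rightarrow> e\<^sup>-\<^sup>h\<close> with \<open>b \<rightarrow> \<infinity>\<close>, then \<open>q \<rightarrow> 1\<close> and \<open>b (1 - q)\<close> is squeezed between
  \<open>q \<cdot> (- b ln q)\<close> and \<open>- b ln q\<close>, both tending to \<open>h\<close>.\<close>
lemma tendsto_mult_one_minus_of_power:
  fixes b :: "'a \<Rightarrow> nat" and q :: "'a \<Rightarrow> real"
  assumes b: "filterlim b at_top G" and q: "\<And>y. q y \<ge> 0"
    and lim: "((\<lambda>y. q y ^ b y) \<longlongrightarrow> exp (- h)) G"
  shows "((\<lambda>y. real (b y) * (1 - q y)) \<longlongrightarrow> h) G"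
proof -
  have "eventually (\<lambda>y. q y ^ b y > 0) G"
    using lim by (rule order_tendstoD) simp
  moreover have "eventually (\<lambda>y. b y \<ge> 1) G"
    using b by (simp add: filterlim_at_top)
  ultimately have pos: "eventually (\<lambda>y. q y > 0 \<and> b y > 0) G"
  proof eventually_elim
    case (elim y)
    hence "q y \<noteq> 0" by (auto simp: power_0_left)
    with q[of y] elim show ?case by simp
  qed
  have "((\<lambda>y. ln (q y ^ b y)) \<longlongrightarrow> - h) G"
    using tendsto_ln[OF lim] by simp
  moreover have "eventually (\<lambda>y. ln (q y ^ b y) = real (b y) * ln (q y)) G"
    using pos by eventually_elim (simp add: ln_realpow)
  ultimately have ln_lim: "((\<lambda>y. real (b y) * ln (q y)) \<longlongrightarrow> - h) G"
    by (rule Lim_transform_eventually)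
  have "((\<lambda>y. real (b y) * ln (q y) * inverse (real (b y))) \<longlongrightarrow> 0) G"
    using tendsto_mult[OF ln_lim tendsto_inverse_0_at_top,
        OF filterlim_compose[OF filterlim_real_sequentially b]] by simp
  moreover have "eventually (\<lambda>y. real (b y) * ln (q y) * inverse (real (b y)) = ln (q y)) G"
    using pos by eventually_elim simp
  ultimately have "((\<lambda>y. ln (q y)) \<longlongrightarrow> 0) G"
    by (rule Lim_transform_eventually)
  hence "((\<lambda>y. exp (ln (q y))) \<longlongrightarrow> 1) G"
    using tendsto_exp by fastforce
  moreover have "eventually (\<lambda>y. exp (ln (q y)) = q y) G"
    using pos by eventually_elim simp
  ultimately have q_lim: "(q \<longlongrightarrow> 1) G"
    by (rule Lim_transform_eventually)
  show ?thesis
  proof (rule tendsto_sandwich)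
    show "eventually (\<lambda>y. q y * - (real (b y) * ln (q y)) \<le> real (b y) * (1 - q y)) G"
      using pos
    proof eventually_elim
      case (elim y)
      thus ?case using mult_left_mono[OF ln_bounds_one_minus(1), of "q y" "real (b y)"]
        by (simp add: algebra_simps)
    qed
    show "eventually (\<lambda>y. real (b y) * (1 - q y) \<le> - (real (b y) * ln (q y))) G"
      using pos
    proof eventually_elim
      case (elim y)
      thus ?case using mult_left_mono[OF ln_bounds_one_minus(2), of "q y" "real (b y)"]
        by simp
    qed
    show "((\<lambda>y. q y * - (real (b y) * ln (q y))) \<longlongrightarrow> h) G"
      using tendsto_mult[OF q_lim tendsto_minus[OF ln_lim]] by simp
    show "((\<lambda>y. - (real (b y) * ln (q y))) \<longlongrightarrow> h) G"
      using tendsto_minus[OF ln_lim] by simp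
  qed
qed

lemma scale_iterate_le:
  fixes T :: "real \<Rightarrow> real"
  assumes step: "\<And>s. s \<ge> s0 \<Longrightarrow> k * T (l * s) \<le> T s" and k: "k > 0" and l: "l \<ge> 1"
    and t: "t \<ge> s0" "t \<ge> 0"
  shows "T (t * l ^ i) \<le> T t / k ^ i"
proof (induction i)
  case 0
  show ?case by simp
next
  case (Suc i)
  have "t * 1 \<le> t * l ^ i" using t l by (intro mult_left_mono one_le_power) simp_all
  hence "k * T (l * (t * l ^ i)) \<le> T (t * l ^ i)" using t by (intro step) simp
  also have "\<dots> \<le> T t / k ^ i" by (rule Suc.IH)
  finally show ?case using k by (simp add: field_simps ac_simps)
qed

definition log_excess :: "real \<Rightarrow> nat \<Rightarrow> real" where
  "log_excess u j = (if real j > u then log 2 (1 + real j - u) else 0)"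

lemma log_excess_le_levels:
  assumes t: "t > 1" and u: "u \<ge> 1" and l: "l > 1"
  shows "ennreal (log_excess u j) \<le> ennreal (log 2 t) * indicator {j. real j > u} j
           + (\<Sum>i. ennreal (log 2 l) * indicator {j. real j > t * l ^ i} j)"
proof (cases "real j > u")
  case False
  thus ?thesis by (simp add: log_excess_def)
next
  case True
  have "log_excess u j \<le> log 2 (real j)" using True u by (simp add: log_excess_def)
  moreover obtain n where "real j / t < l ^ n" using real_arch_pow[OF l] by blast
  hence n: "real j \<le> t * l ^ n" using t by (simp add: pos_divide_less_eq mult.commute)
  define N where "N = (LEAST n. real j \<le> t * l ^ n)"
  have N: "real j \<le> t * l ^ N" unfolding N_def by (rule LeastI[of _ n]) (rule n)
  have below: "real j > t * l ^ i" if "i < N" for i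
    using not_less_Least[OF that[unfolded N_def]] by simp
  have "log 2 (real j) \<le> log 2 (t * l ^ N)" using N True u by simp
  also have "\<dots> = log 2 t + real N * log 2 l" using t l by (simp add: log_mult log_nat_power)
  finally have "ennreal (log_excess u j) \<le> ennreal (log 2 t) + ennreal (real N * log 2 l)"
    using \<open>log_excess u j \<le> log 2 (real j)\<close> t l by (simp flip: ennreal_plus)
  also have "ennreal (real N * log 2 l)
               = (\<Sum>i<N. ennreal (log 2 l) * indicator {j. real j > t * l ^ i} j)"
    using below l by (simp add: ennreal_of_nat_eq_real_of_nat ennreal_mult')
  also have "\<dots> \<le> (\<Sum>i. ennreal (log 2 l) * indicator {j. real j > t * l ^ i} j)"
    by (rule sum_le_suminf) auto
  finally show ?thesis using True by (simp add: add_left_mono)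
qed

lemma nn_integral_log_excess_le:
  fixes p :: "nat pmf" and T :: "real \<Rightarrow> real"
  assumes tail: "\<And>x. measure_pmf.prob p {j. real j > x} \<le> T x"
    and t: "t > 1" and u: "u \<ge> 1" and l: "l > 1" and k: "k > 1"
    and decay: "\<And>i. T (t * l ^ i) \<le> T t / k ^ i"
  shows "(\<integral>\<^sup>+ j. log_excess u j \<partial>p)
           \<le> ennreal (measure_pmf.prob p {j. real j > u} * log 2 t + log 2 l * k / (k - 1) * T t)"
proof -
  define c where "c = log 2 l"
  define S where "S i = {j. real j > t * l ^ i}" for i
  have c: "c > 0" using l by (simp add: c_def)
  have T: "T t \<ge> 0" using tail[of t] measure_nonneg[of p] by (meson order_trans)
  have "(\<Sum>i. ennreal c * emeasure p (S i)) \<le> (\<Sum>i. ennreal (c * T t * (1 / k) ^ i))"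
  proof (intro suminf_le summableI)
    fix i
    have "measure_pmf.prob p (S i) \<le> T t / k ^ i"
      unfolding S_def using tail decay by (rule order_trans)
    hence "c * measure_pmf.prob p (S i) \<le> c * (T t / k ^ i)"
      using c by (intro mult_left_mono) simp_all
    also have "\<dots> = c * T t * (1 / k) ^ i" by (simp add: power_one_over)
    finally have "c * measure_pmf.prob p (S i) \<le> c * T t * (1 / k) ^ i" .
    thus "ennreal c * emeasure p (S i) \<le> ennreal (c * T t * (1 / k) ^ i)"
      using c by (simp add: measure_pmf.emeasure_eq_measure ennreal_leI flip: ennreal_mult)
  qed
  also have "\<dots> = ennreal (c * T t * (1 / (1 - 1 / k)))"
    using c T k by (simp add: suminf_ennreal2 summable_geometric suminf_mult suminf_geometric)
  finally have levels: "(\<Sum>i. ennreal c * emeasure p (S i)) \<le> ennreal (c * k / (k - 1) * T t)"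
    using k by (simp add: field_simps)
  have "(\<integral>\<^sup>+ j. log_excess u j \<partial>p) \<le> (\<integral>\<^sup>+ j. ennreal (log 2 t) * indicator {j. real j > u} j
                                           + (\<Sum>i. ennreal c * indicator (S i) j) \<partial>p)"
    unfolding c_def S_def by (intro nn_integral_mono log_excess_le_levels[OF t u l])
  also have "\<dots> = ennreal (log 2 t) * emeasure p {j. real j > u}
                   + (\<Sum>i. ennreal c * emeasure p (S i))"
    by (simp add: nn_integral_add nn_integral_cmult nn_integral_suminf nn_integral_cmult_indicator)
  also have "\<dots> \<le> ennreal (log 2 t * measure_pmf.prob p {j. real j > u} + c * k / (k - 1) * T t)"
    using levels t c k T
    by (simp add: measure_pmf.emeasure_eq_measure ennreal_plus ennreal_mult add_left_mono)
  finally show ?thesis by (simp add: c_def mult.commute)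
qed

lemma expectation_log_excess_le:
  fixes p :: "nat pmf" and T :: "real \<Rightarrow> real"
  assumes tail: "\<And>x. measure_pmf.prob p {j. real j > x} \<le> T x"
    and t: "t > 1" and u: "u \<ge> 1" and l: "l > 1" and k: "k > 1"
    and decay: "\<And>i. T (t * l ^ i) \<le> T t / k ^ i"
  shows "integrable p (log_excess u)"
    and "measure_pmf.expectation p (log_excess u)
           \<le> measure_pmf.prob p {j. real j > u} * log 2 t + log 2 l * k / (k - 1) * T t"
proof -
  note bound = nn_integral_log_excess_le[OF assms]
  have nonneg: "log_excess u j \<ge> 0" for j using u by (simp add: log_excess_def)
  have "T t \<ge> 0" using tail[of t] measure_nonneg[of p] by (meson order_trans)
  show "integrable p (log_excess u)"
    using bound nonneg by (intro integrableI_bounded) (auto simp: top.not_eq_extremum le_less_trans)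
  have "measure_pmf.expectation p (log_excess u) = enn2real (\<integral>\<^sup>+ j. log_excess u j \<partial>p)"
    using nonneg by (intro integral_eq_nn_integral) auto
  also have "\<dots> \<le> measure_pmf.prob p {j. real j > u} * log 2 t + log 2 l * k / (k - 1) * T t"
    using bound t l k \<open>T t \<ge> 0\<close> by (intro enn2real_leI) (auto intro!: add_nonneg_nonneg)
  finally show "measure_pmf.expectation p (log_excess u)
           \<le> measure_pmf.prob p {j. real j > u} * log 2 t + log 2 l * k / (k - 1) * T t" .
qed

locale unbounded_continuous_cdf =
  fixes F :: "real \<Rightarrow> real"
  assumes mono: "mono F" and vanishes_neg: "\<And>x. x < 0 \<Longrightarrow> F x = 0"
    and tendsto_one: "(F \<longlongrightarrow> 1) at_top" and continuous: "continuous_on UNIV F"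
    and less_one: "\<And>x. F x < 1"
begin

lemma nonneg: "F x \<ge> 0"
  using monoD[OF mono, of "min x (-1)" x] vanishes_neg[of "min x (-1)"] by simp

text \<open>Continuity makes the infimum defining \<open>U r\<close> attained, so \<open>U\<close> and \<open>F\<close> form a
  Galois connection.\<close>
lemma tailinv_le_iff:
  assumes r: "r > 1"
  shows "tailinv F r \<le> z \<longleftrightarrow> 1 - 1 / r \<le> F z"
proof -
  define S where "S = {x. 1 - 1 / r \<le> F x}"
  have "eventually (\<lambda>x. 1 - 1 / r < F x) at_top"
    using tendsto_one r by (intro order_tendstoD) auto
  then obtain x0 where "1 - 1 / r < F x0" by (auto simp: eventually_at_top_linorder)
  hence ne: "S \<noteq> {}" by (auto simp: S_def intro: less_imp_le)
  have "0 \<le> x" if "x \<in> S" for x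
    using that r vanishes_neg[of x] by (force simp: S_def)
  hence bdd: "bdd_below S" by (auto simp: bdd_below_def)
  have "closed S"
    unfolding S_def by (rule closed_Collect_le[OF continuous_on_const continuous])
  hence "Inf S \<in> S" by (rule closed_contains_Inf[OF ne bdd])
  hence "1 - 1 / r \<le> F z" if "Inf S \<le> z"
    using monoD[OF mono that] by (simp add: S_def)
  moreover have "Inf S \<le> z" if "1 - 1 / r \<le> F z"
    using that bdd by (intro cInf_lower) (simp_all add: S_def)
  ultimately show ?thesis unfolding tailinv_def S_def by blast
qed

lemma tailinv_nonneg: "r > 1 \<Longrightarrow> tailinv F r \<ge> 0"
  using tailinv_le_iff[of r "tailinv F r"] vanishes_neg[of "tailinv F r"] by fastforce

lemma eventually_tailinv_le:
  assumes \<rho>: "filterlim \<rho> at_top G" and lim: "((\<lambda>y. \<rho> y * (1 - F (z y))) \<longlongrightarrow> c) G"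
    and c: "c < 1"
  shows "eventually (\<lambda>y. tailinv F (\<rho> y) \<le> z y) G"
proof -
  have "eventually (\<lambda>y. \<rho> y > 1) G" using \<rho> by (simp add: filterlim_at_top_dense)
  moreover have "eventually (\<lambda>y. \<rho> y * (1 - F (z y)) < 1) G"
    using lim c by (rule order_tendstoD)
  ultimately show ?thesis
    by eventually_elim (simp add: tailinv_le_iff field_simps)
qed

lemma eventually_le_tailinv:
  assumes \<rho>: "filterlim \<rho> at_top G" and lim: "((\<lambda>y. \<rho> y * (1 - F (z y))) \<longlongrightarrow> c) G"
    and c: "c > 1"
  shows "eventually (\<lambda>y. z y \<le> tailinv F (\<rho> y)) G"
proof -
  have "eventually (\<lambda>y. \<rho> y > 1) G" using \<rho> by (simp add: filterlim_at_top_dense)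
  moreover have "eventually (\<lambda>y. \<rho> y * (1 - F (z y)) > 1) G"
    using lim c by (rule order_tendstoD)
  ultimately show ?thesis
  proof eventually_elim
    case (elim y)
    hence "F (z y) < 1 - 1 / \<rho> y" by (simp add: field_simps)
    hence "\<not> tailinv F (\<rho> y) \<le> z y" using elim by (simp add: tailinv_le_iff)
    thus ?case by simp
  qed
qed

lemma tendsto_MDA_tail:
  fixes A :: "nat \<Rightarrow> real" and b :: "'a \<Rightarrow> nat"
  assumes "(\<lambda>n. F (A n * x + tailinv F (real n)) ^ n) \<longlonglongrightarrow> gev \<gamma> x"
    and b: "filterlim b at_top G"
  shows "((\<lambda>y. real (b y) * (1 - F (A (b y) * x + tailinv F (real (b y)))))
           \<longlongrightarrow> gev_exponent \<gamma> x) G"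
  using filterlim_compose[OF assms] by (intro tendsto_mult_one_minus_of_power[OF b nonneg])
    (simp add: gev_eq_exp_gev_exponent)

lemma tendsto_MDA_tail_rescaled:
  fixes A :: "nat \<Rightarrow> real"
  assumes limA: "(\<lambda>n. F (A n * x + tailinv F (real n)) ^ n) \<longlonglongrightarrow> gev \<gamma> x" and K: "K > 0"
  shows "((\<lambda>r. c * r * (1 - F (A (nat \<lfloor>r / K\<rfloor>) * x + tailinv F (real (nat \<lfloor>r / K\<rfloor>)))))
           \<longlongrightarrow> c * K * gev_exponent \<gamma> x) at_top"
proof -
  define b where "b r = nat \<lfloor>r / K\<rfloor>" for r
  define z where "z r = A (b r) * x + tailinv F (real (b r))" for r
  have b: "filterlim b at_top at_top" unfolding b_def using K by real_asymp
  have r_b: "((\<lambda>r. r / real (b r)) \<longlongrightarrow> K) at_top" unfolding b_def using K by real_asymp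
  have "((\<lambda>r. c * (r / real (b r)) * (real (b r) * (1 - F (z r))))
          \<longlongrightarrow> c * K * gev_exponent \<gamma> x) at_top"
    unfolding z_def by (intro tendsto_mult tendsto_const r_b tendsto_MDA_tail[OF limA b])
  moreover have "eventually (\<lambda>r. b r \<ge> 1) at_top" using b by (simp add: filterlim_at_top)
  hence "eventually (\<lambda>r. c * (r / real (b r)) * (real (b r) * (1 - F (z r)))
                          = c * r * (1 - F (z r))) at_top"
    by eventually_elim simp
  ultimately show ?thesis unfolding z_def b_def by (rule Lim_transform_eventually)
qed

text \<open>Sample the domain-of-attraction limit at \<open>n = \<lfloor>r / K\<rfloor>\<close>, with \<open>K\<close> chosen so that the
  point \<open>A\<^sub>n x + U n\<close> lies below \<open>U r\<close> while \<open>A\<^sub>n (l x) + U n\<close> lies above \<open>U (k r)\<close>; since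
  \<open>U n \<ge> 0\<close>, scaling the first bound by \<open>l \<ge> 1\<close> gives the second.\<close>
lemma eventually_tailinv_mult_le:
  fixes A :: "nat \<Rightarrow> real"
  assumes limA: "\<And>x. 1 + \<gamma> * x > 0 \<Longrightarrow> (\<lambda>n. F (A n * x + tailinv F (real n)) ^ n) \<longlonglongrightarrow> gev \<gamma> x"
    and \<gamma>: "\<gamma> \<ge> 0" and k: "k > 1" and l: "l \<ge> 1" and x: "x > 0"
    and ratio: "k * gev_exponent \<gamma> (l * x) < gev_exponent \<gamma> x"
  shows "eventually (\<lambda>r. tailinv F (r * k) \<le> l * tailinv F r) at_top"
proof -
  have dom: "1 + \<gamma> * x > 0" "1 + \<gamma> * (l * x) > 0"
    using \<gamma> x l by (simp_all add: add_pos_nonneg)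
  have h: "gev_exponent \<gamma> x > 0" "gev_exponent \<gamma> (l * x) > 0"
    using gev_exponent_pos[OF dom(1)] gev_exponent_pos[OF dom(2)] .
  have "1 / gev_exponent \<gamma> x < 1 / (k * gev_exponent \<gamma> (l * x))"
    using ratio h k by (intro divide_strict_left_mono) simp_all
  then obtain K where "1 / gev_exponent \<gamma> x < K" "K < 1 / (k * gev_exponent \<gamma> (l * x))"
    using dense by blast
  hence K1: "1 < K * gev_exponent \<gamma> x" and K2: "k * K * gev_exponent \<gamma> (l * x) < 1"
    using h k by (simp_all add: field_simps)
  have K: "K > 0" using K1 h(1) mult_nonpos_nonneg[of K "gev_exponent \<gamma> x"] by linarith
  define b where "b r = nat \<lfloor>r / K\<rfloor>" for r
  define z where "z s r = A (b r) * s + tailinv F (real (b r))" for s r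
  note scaled = tendsto_MDA_tail_rescaled[OF limA K, folded b_def, folded z_def]
  have "((\<lambda>r. r * (1 - F (z x r))) \<longlongrightarrow> K * gev_exponent \<gamma> x) at_top"
    using scaled[OF dom(1), of 1] by simp
  hence "eventually (\<lambda>r. z x r \<le> tailinv F r) at_top"
    using K1 by (intro eventually_le_tailinv[OF filterlim_ident])
  moreover have "eventually (\<lambda>r. tailinv F (k * r) \<le> z (l * x) r) at_top"
    using scaled[OF dom(2)] K2 k by (intro eventually_tailinv_le[of "\<lambda>r. k * r"]) real_asymp+
  moreover have "filterlim b at_top at_top" unfolding b_def using K by real_asymp
  hence "eventually (\<lambda>r. b r \<ge> 2) at_top" by (simp add: filterlim_at_top)
  ultimately show ?thesis
  proof eventually_elim
    case (elim r)
    have "tailinv F (real (b r)) \<ge> 0" using elim by (intro tailinv_nonneg) simp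
    hence "A (b r) * (l * x) + tailinv F (real (b r))
            \<le> l * (A (b r) * x + tailinv F (real (b r)))"
      using mult_right_mono[OF l, of "tailinv F (real (b r))"] by (simp add: algebra_simps)
    also have "\<dots> \<le> l * tailinv F r" using elim l by (simp add: z_def)
    finally show ?case using elim by (simp add: z_def mult.commute)
  qed
qed

lemma eventually_tail_mult_le_of_tailinv:
  assumes ev: "eventually (\<lambda>r. tailinv F (r * k) \<le> l * tailinv F r) at_top"
    and k: "k \<ge> 1" and l: "l > 0"
  shows "eventually (\<lambda>s. k * (1 - F (l * s)) \<le> 1 - F s) at_top"
proof -
  define R where "R s = inverse (1 - F s)" for s
  have "((\<lambda>s. 1 - F s) \<longlongrightarrow> 0) at_top"
    using tendsto_diff[OF tendsto_const[of 1] tendsto_one] by simp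
  hence "filterlim R at_top at_top"
    unfolding R_def by (rule filterlim_inverse_at_top) (simp add: less_one)
  hence "eventually (\<lambda>s. tailinv F (R s * k) \<le> l * tailinv F (R s)) at_top"
    using ev by (rule filterlim_iff[THEN iffD1, rule_format])
  moreover have "eventually (\<lambda>s. F s > 0) at_top"
    using tendsto_one by (rule order_tendstoD) simp
  ultimately show ?thesis
  proof eventually_elim
    case (elim s)
    have q: "1 - F s > 0" using less_one[of s] by simp
    have R: "R s > 1" using elim q by (simp add: R_def field_simps)
    hence Rk: "R s * k > 1" using mult_less_le_imp_less[OF _ k, of 1 "R s"] by simp
    have "tailinv F (R s) \<le> s" using R q by (simp add: tailinv_le_iff R_def inverse_eq_divide)
    hence "l * tailinv F (R s) \<le> l * s" using l by simp
    hence "tailinv F (R s * k) \<le> l * s" using elim by linarith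
    hence "1 - 1 / (R s * k) \<le> F (l * s)" using Rk by (simp add: tailinv_le_iff)
    moreover have "1 / (R s * k) = (1 - F s) / k" by (simp add: R_def inverse_eq_divide)
    ultimately have "1 - F (l * s) \<le> (1 - F s) / k" by simp
    thus ?case using k by (simp add: pos_le_divide_eq mult.commute)
  qed
qed

lemma eventually_tail_mult_le:
  assumes "MDA F \<gamma>" and "\<gamma> \<ge> 0" and "k > 1" and "l > 1" and "l > k powr \<gamma>"
  shows "eventually (\<lambda>s. k * (1 - F (l * s)) \<le> 1 - F s) at_top"
proof -
  obtain A :: "nat \<Rightarrow> real" where
    "\<And>x. 1 + \<gamma> * x > 0 \<Longrightarrow> (\<lambda>n. F (A n * x + tailinv F (real n)) ^ n) \<longlonglongrightarrow> gev \<gamma> x"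
    using assms(1) unfolding MDA_def by blast
  moreover obtain x where "x > 0" "k * gev_exponent \<gamma> (l * x) < gev_exponent \<gamma> x"
    using exists_gev_exponent_ratio assms(2-5) by blast
  ultimately have "eventually (\<lambda>r. tailinv F (r * k) \<le> l * tailinv F r) at_top"
    using assms(2-4) by (intro eventually_tailinv_mult_le) simp_all
  thus ?thesis using assms(3,4) by (intro eventually_tail_mult_le_of_tailinv) simp_all
qed

lemma log_excess_bound:
  assumes "MDA F \<gamma>" and "\<gamma> \<ge> 0" and "\<epsilon> > 0"
  shows "\<exists>t0. \<forall>(p :: nat pmf) t u. (\<forall>x. measure_pmf.prob p {j. real j > x} \<le> 1 - F x) \<longrightarrow>
           t > t0 \<longrightarrow> u \<ge> 1 \<longrightarrow>
           integrable p (log_excess u) \<and>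
           measure_pmf.expectation p (log_excess u)
             \<le> measure_pmf.prob p {j. real j > u} * log 2 t + (\<gamma> / ln 2 + \<epsilon>) * (1 - F t)"
proof -
  obtain k l where k: "k > 1" and l: "l > 1" "l > k powr \<gamma>"
    and const: "log 2 l * k / (k - 1) \<le> \<gamma> / ln 2 + \<epsilon>"
    using exists_scale_constants[OF assms(2,3)] by blast
  obtain s0 where decay: "\<And>s. s \<ge> s0 \<Longrightarrow> k * (1 - F (l * s)) \<le> 1 - F s"
    using eventually_tail_mult_le[OF assms(1,2) k l] by (auto simp: eventually_at_top_linorder)
  have "integrable p (log_excess u) \<and> measure_pmf.expectation p (log_excess u)
          \<le> measure_pmf.prob p {j. real j > u} * log 2 t + (\<gamma> / ln 2 + \<epsilon>) * (1 - F t)"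
    if tail: "\<And>x. measure_pmf.prob p {j. real j > x} \<le> 1 - F x"
      and t: "t > max s0 1" and u: "u \<ge> 1" for p :: "nat pmf" and t u
  proof -
    have "1 - F (t * l ^ i) \<le> (1 - F t) / k ^ i" for i
      using decay k l t by (intro scale_iterate_le[where T = "\<lambda>s. 1 - F s"]) auto
    note bound = expectation_log_excess_le[OF tail _ u l(1) k this]
    have "log 2 l * k / (k - 1) * (1 - F t) \<le> (\<gamma> / ln 2 + \<epsilon>) * (1 - F t)"
      using const less_one[of t] by (intro mult_right_mono) simp_all
    thus ?thesis using bound t by fastforce
  qed
  thus ?thesis by blast
qed

end

theorem lemma3:
  fixes F :: "real \<Rightarrow> real" and \<gamma> :: real
  assumes "smoothed_envelope F" and "MDA F \<gamma>" and "\<gamma> \<ge> 0"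
    and "\<forall>x. F x < 1"
  shows "\<forall>\<epsilon>>0. \<exists>t0. \<forall>p :: nat pmf.
           (set_pmf p \<subseteq> {0<..} \<and>
            (\<forall>x::real. measure_pmf.prob p {k. real k > x} \<le> 1 - F x)) \<longrightarrow>
           (\<forall>t>t0. \<forall>u\<ge>(1::real).
              integrable (measure_pmf p) (\<lambda>k. if real k > u then log 2 (1 + real k - u) else 0) \<and>
              measure_pmf.expectation p (\<lambda>k. if real k > u then log 2 (1 + real k - u) else 0)
                \<le> measure_pmf.prob p {k. real k > u} * log 2 t + (\<gamma> / ln 2 + \<epsilon>) * (1 - F t))"
proof -
  interpret unbounded_continuous_cdf F
    using assms(1,4) unfolding smoothed_envelope_def by unfold_locales auto
  have log_excess_eq: "(\<lambda>j. if real j > u then log 2 (1 + real j - u) else 0) = log_excess u"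
    for u by (simp add: fun_eq_iff log_excess_def)
  show ?thesis
    unfolding log_excess_eq using log_excess_bound[OF assms(2,3)] by meson
qed

end
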